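(* Let $\mathbf{X}\in\mathbb{R}^{m\times n}$, fix $p$ with $0<p<1$, and for each positive integer $d$ define $\theta(d)=\dfrac{p}{d-(d-1)p}$. Consider the problem $$\min_{d,\mathbf{U},\mathbf{V}}\ \mathbb{E}_{\mathbf{r}}\left\|\mathbf{X}-\tfrac{1}{\theta(d)}\mathbf{U}\,\mathrm{diag}(\mathbf{r})\,\mathbf{V}^\top\right\|_F^2,$$ over positive integers $d$, $\mathbf{U}\in\mathbb{R}^{m\times d}$, $\mathbf{V}\in\mathbb{R}^{n\times d}$, where $\mathbf{r}\in\mathbb{R}^d$ has i.i.d. $\mathrm{Bernoulli}(\theta(d))$ entries. Let $\mathbf{U}^{\rm opt}\in\mathbb{R}^{m\times d^{\rm opt}}$, $\mathbf{V}^{\rm opt}\in\mathbb{R}^{n\times d^{\rm opt}}$ attain the global optimum of this problem. Then $\mathbf{A}^{\rm opt}=\mathbf{U}^{\rm opt}(\mathbf{V}^{\rm opt})^\top$ is the global minimizer over $\mathbf{A}\in\mathbb{R}^{m\times n}$ of $$\|\mathbf{X}-\mathbf{A}\|_F^2+\frac{1-p}{p}\|\mathbf{A}\|_\star^2.$$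
   Context: $\|\cdot\|_F$ is the Frobenius norm, $\|\cdot\|_\star$ the nuclear norm (sum of singular values), $\mathrm{diag}(\mathbf{r})$ the diagonal matrix with diagonal $\mathbf{r}$, and $\mathbb{E}_{\mathbf{r}}$ the expectation with respect to $\mathbf{r}$. *)

theory Defs
  imports "HOL-Probability.Product_PMF" "Jordan_Normal_Form.Char_Poly"
begin

definition theta :: "real \<Rightarrow> nat \<Rightarrow> real" where
  "theta p d = p / (real d - (real d - 1) * p)"

definition frob_sq :: "real mat \<Rightarrow> real" where
  "frob_sq A = (\<Sum>i<dim_row A. \<Sum>j<dim_col A. (index_mat A (i, j))\<^sup>2)"

text \<open>Singular values of A are the square roots of the eigenvalues of A^T A, counted
  with algebraic multiplicity; the nuclear norm is their sum.\<close>
definition nuclear_norm :: "real mat \<Rightarrow> real" where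
  "nuclear_norm A =
     (let q = char_poly (transpose_mat A * A)
      in \<Sum>x\<in>{x. poly q x = 0}. real (order x q) * sqrt x)"

definition diag_bool :: "nat \<Rightarrow> (nat \<Rightarrow> bool) \<Rightarrow> real mat" where
  "diag_bool d r = mat d d (\<lambda>(i, j). if i = j then of_bool (r i) else 0)"

definition dropout_obj :: "real \<Rightarrow> real mat \<Rightarrow> nat \<Rightarrow> real mat \<Rightarrow> real mat \<Rightarrow> real" where
  "dropout_obj p X d U V =
     measure_pmf.expectation (Pi_pmf {..<d} False (\<lambda>_. bernoulli_pmf (theta p d)))
       (\<lambda>r. frob_sq (X - (1 / theta p d) \<cdot>\<^sub>m (U * diag_bool d r * transpose_mat V)))"

end

theory Submission
  imports Defs "Jordan_Normal_Form.Schur_Decomposition"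
begin

text \<open>Averaging over the dropout mask turns the objective into
  \<open>\<parallel>X - U V\<^sup>T\<parallel>\<^sub>F\<^sup>2 + (1-p)/p \<cdot> d \<Sum>\<^sub>k |u\<^sub>k|\<^sup>2 |v\<^sub>k|\<^sup>2\<close>, since \<open>1/\<theta>(d) - 1 = d (1-p)/p\<close>.
  For a factorization \<open>A = U V\<^sup>T\<close>, pairing the singular vectors of \<open>A\<close> with the columns
  of \<open>U\<close> and \<open>V\<close> (Bessel's inequality and Cauchy-Schwarz) gives
  \<open>\<parallel>A\<parallel>\<^sub>* \<le> \<Sum>\<^sub>k |u\<^sub>k| |v\<^sub>k|\<close>, hence \<open>\<parallel>A\<parallel>\<^sub>*\<^sup>2 \<le> d \<Sum>\<^sub>k |u\<^sub>k|\<^sup>2 |v\<^sub>k|\<^sup>2\<close>, so the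
  dropout optimum is at least the regularized objective at \<open>U\<^sub>o\<^sub>p\<^sub>t V\<^sub>o\<^sub>p\<^sub>t\<^sup>T\<close>.
  Conversely, splitting the \<open>i\<close>-th singular component of any \<open>A\<close> into about \<open>N \<sigma>\<^sub>i\<close>
  equal columns gives factorizations of \<open>A\<close> whose penalty tends to \<open>\<parallel>A\<parallel>\<^sub>*\<^sup>2\<close> as
  \<open>N \<rightarrow> \<infinity>\<close>, so the dropout optimum is at most the regularized objective at every \<open>A\<close>.\<close>

unbundle no vec_syntax
unbundle no inner_syntax

section \<open>Orthonormal matrices\<close>

lemma index_mult_mat_sum:
  assumes "A \<in> carrier_mat m k" "B \<in> carrier_mat k n" "i < m" "j < n"
  shows "(A * B) $$ (i,j) = (\<Sum>l<k. A $$ (i,l) * B $$ (l,j))"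
  using assms by (auto simp: scalar_prod_def atLeast0LessThan intro!: sum.cong)

lemma index_mult_mat_vec_sum:
  assumes "A \<in> carrier_mat n k" "v \<in> carrier_vec k" "i < n"
  shows "(A *\<^sub>v v) $ i = (\<Sum>j<k. A $$ (i,j) * v $ j)"
  using assms by (auto simp: scalar_prod_def atLeast0LessThan intro!: sum.cong)

definition orthonormal_mat :: "nat \<Rightarrow> real mat \<Rightarrow> bool" where
  "orthonormal_mat n Q \<longleftrightarrow> Q \<in> carrier_mat n n \<and> transpose_mat Q * Q = 1\<^sub>m n"

lemma orthonormal_matD:
  assumes "orthonormal_mat n Q"
  shows "Q \<in> carrier_mat n n" "transpose_mat Q * Q = 1\<^sub>m n" "Q * transpose_mat Q = 1\<^sub>m n"
proof -
  show Q: "Q \<in> carrier_mat n n" and QTQ: "transpose_mat Q * Q = 1\<^sub>m n"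
    using assms unfolding orthonormal_mat_def by auto
  show "Q * transpose_mat Q = 1\<^sub>m n"
    by (rule mat_mult_left_right_inverse[OF _ Q QTQ]) (use Q in auto)
qed

lemma orthonormal_mat_mult:
  assumes P: "orthonormal_mat n P" and Q: "orthonormal_mat n Q"
  shows "orthonormal_mat n (P * Q)"
proof -
  note P = orthonormal_matD[OF P] and Q = orthonormal_matD[OF Q]
  have "transpose_mat (P * Q) * (P * Q) = transpose_mat Q * (transpose_mat P * P) * Q"
    using P(1) Q(1) by (simp add: transpose_mult[of _ n n _ n] assoc_mult_mat[of _ n n _ n _ n])
  also have "\<dots> = 1\<^sub>m n" by (subst P(2)) (use Q in simp)
  finally show ?thesis unfolding orthonormal_mat_def using mult_carrier_mat[OF P(1) Q(1)] by blast
qed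

lemma orthonormal_mat_of_cols:
  assumes "length ws = n" "set ws \<subseteq> carrier_vec n"
    and "\<And>i j. i < n \<Longrightarrow> j < n \<Longrightarrow> ws ! i \<bullet> ws ! j = (if i = j then 1 else 0)"
  shows "orthonormal_mat n (mat_of_cols n ws)"
proof -
  have "(transpose_mat (mat_of_cols n ws) * mat_of_cols n ws) $$ (i, j) = 1\<^sub>m n $$ (i, j)"
    if "i < n" "j < n" for i j
  proof -
    have "ws ! i \<in> carrier_vec n" "ws ! j \<in> carrier_vec n" using assms that by auto
    thus ?thesis using assms that by simp
  qed
  thus ?thesis unfolding orthonormal_mat_def using assms(1) by (auto intro!: eq_matI)
qed

lemma orthonormal_mat_of_normalized_cols:
  assumes ws: "length ws = n" "set ws \<subseteq> carrier_vec n" "corthogonal ws"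
  shows "orthonormal_mat n (mat_of_cols n (map (\<lambda>w. (1 / sqrt (w \<bullet> w)) \<cdot>\<^sub>v w) ws))"
proof (rule orthonormal_mat_of_cols)
  show "length (map (\<lambda>w. (1 / sqrt (w \<bullet> w)) \<cdot>\<^sub>v w) ws) = n"
    and "set (map (\<lambda>w. (1 / sqrt (w \<bullet> w)) \<cdot>\<^sub>v w) ws) \<subseteq> carrier_vec n" using ws by auto
  have pos: "ws ! i \<bullet> ws ! i > 0" if "i < n" for i
  proof -
    have "ws ! i \<bullet> ws ! i \<noteq> 0"
      using corthogonalD[OF ws(3), of i i] that ws(1) by (simp add: scalar_prod_def)
    moreover have "ws ! i \<bullet> ws ! i \<ge> 0" unfolding scalar_prod_def by (intro sum_nonneg) auto
    ultimately show ?thesis by linarith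
  qed
  fix i j assume ij: "i < n" "j < n"
  have "ws ! i \<in> carrier_vec n" "ws ! j \<in> carrier_vec n" using ws ij by auto
  hence "map (\<lambda>w. (1 / sqrt (w \<bullet> w)) \<cdot>\<^sub>v w) ws ! i \<bullet> map (\<lambda>w. (1 / sqrt (w \<bullet> w)) \<cdot>\<^sub>v w) ws ! j
      = (ws ! i \<bullet> ws ! j) / (sqrt (ws ! i \<bullet> ws ! i) * sqrt (ws ! j \<bullet> ws ! j))"
    using ij ws(1) by (simp add: scalar_prod_smult_distrib[of _ n])
  moreover have "ws ! i \<bullet> ws ! j = 0" if "i \<noteq> j"
    using corthogonalD[OF ws(3), of i j] ij that ws(1) by (simp add: scalar_prod_def)
  ultimately show "map (\<lambda>w. (1 / sqrt (w \<bullet> w)) \<cdot>\<^sub>v w) ws ! i \<bullet> map (\<lambda>w. (1 / sqrt (w \<bullet> w)) \<cdot>\<^sub>v w) ws ! j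
      = (if i = j then 1 else 0)"
    using pos[OF ij(1)] by (auto simp: real_sqrt_mult[symmetric])
qed

lemma exists_orthonormal_mat_first_col:
  assumes v: "v \<in> carrier_vec n" and v1: "v \<bullet> v = 1"
  shows "\<exists>Q. orthonormal_mat n Q \<and> col Q 0 = v"
proof -
  interpret cof_vec_space n "TYPE(real)" .
  have n: "0 < n" using v v1 by (cases n) (auto simp: scalar_prod_def)
  have v0: "v \<noteq> 0\<^sub>v n" using v1 v by auto
  define b where "b = basis_completion v"
  from basis_completion[OF v v0, folded b_def]
  have dist_b: "distinct b" and indep: "\<not> lin_dep (set b)" and b: "set b \<subseteq> carrier_vec n"
    and hd_b: "hd b = v" and len_b: "length b = n" by auto
  from hd_b len_b n obtain vs where bv: "b = v # vs" by (cases b) auto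
  define ws where "ws = gram_schmidt n b"
  from gram_schmidt_result[OF b dist_b indep refl, folded ws_def]
  have ws: "set ws \<subseteq> carrier_vec n" "corthogonal ws" "length ws = n" by (auto simp: len_b)
  have ws0: "ws ! 0 = v"
    using gram_schmidt_hd[OF v, of vs] ws(3) n unfolding ws_def[symmetric] bv[symmetric]
    by (cases ws) auto
  have "orthonormal_mat n (mat_of_cols n (map (\<lambda>w. (1 / sqrt (w \<bullet> w)) \<cdot>\<^sub>v w) ws))"
    by (rule orthonormal_mat_of_normalized_cols[OF ws(3,1,2)])
  moreover have "col (mat_of_cols n (map (\<lambda>w. (1 / sqrt (w \<bullet> w)) \<cdot>\<^sub>v w) ws)) 0 = v"
    using ws n ws0 v v1 by simp
  ultimately show ?thesis by blast
qed

section \<open>The spectral theorem for real symmetric matrices\<close>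

lemma eigenvalue_of_real_symmetric_mat_is_real:
  fixes M :: "real mat"
  assumes M: "M \<in> carrier_mat n n" and sym: "transpose_mat M = M"
    and ev: "eigenvalue (map_mat complex_of_real M) a"
  shows "a \<in> \<real>"
proof -
  let ?Mc = "map_mat complex_of_real M"
  have Mc: "?Mc \<in> carrier_mat n n" using M by auto
  obtain v where v: "v \<in> carrier_vec n" and v0: "v \<noteq> 0\<^sub>v n" and Mv: "?Mc *\<^sub>v v = a \<cdot>\<^sub>v v"
    using ev Mc unfolding eigenvalue_def eigenvector_def by auto
  have Mij: "M $$ (i,j) = M $$ (j,i)" if "i < n" "j < n" for i j
    using arg_cong[OF sym, of "\<lambda>A. A $$ (i,j)"] that M by auto
  \<comment> \<open>the Hermitian form \<open>v\<^sup>* M v\<close> equals \<open>a |v|\<^sup>2\<close> and is real\<close>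
  define s where "s = (\<Sum>i<n. \<Sum>j<n. cnj (v $ i) * complex_of_real (M $$ (i,j)) * v $ j)"
  define t where "t = (\<Sum>i<n. cnj (v $ i) * v $ i)"
  have "s = (\<Sum>i<n. cnj (v $ i) * (?Mc *\<^sub>v v) $ i)"
    unfolding s_def using M
    by (intro sum.cong refl)
      (simp add: index_mult_mat_vec_sum[OF Mc v] sum_distrib_left mult.assoc del: index_mult_mat_vec)
  also have "\<dots> = a * t"
    unfolding Mv t_def using v by (auto simp: sum_distrib_left intro!: sum.cong)
  finally have s_eq: "s = a * t" .
  have "cnj s = (\<Sum>i<n. \<Sum>j<n. v $ i * complex_of_real (M $$ (i,j)) * cnj (v $ j))"
    unfolding s_def by simp
  also have "\<dots> = (\<Sum>j<n. \<Sum>i<n. v $ i * complex_of_real (M $$ (i,j)) * cnj (v $ j))"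
    by (rule sum.swap)
  also have "\<dots> = s" unfolding s_def by (intro sum.cong refl) (auto simp: Mij mult_ac)
  finally have s_real: "cnj s = s" .
  obtain i where i: "i < n" "v $ i \<noteq> 0"
    using v v0 by (metis eq_vecI carrier_vecD index_zero_vec)
  have t_norm: "t = complex_of_real (\<Sum>i<n. (cmod (v $ i))\<^sup>2)"
    unfolding t_def of_real_sum by (intro sum.cong refl) (metis complex_norm_square mult.commute)
  have "(\<Sum>i<n. (cmod (v $ i))\<^sup>2) > 0" by (rule sum_pos2[of _ i]) (use i in auto)
  hence "t \<noteq> 0" unfolding t_norm by (metis of_real_eq_0_iff less_irrefl)
  moreover have "cnj t = t" unfolding t_norm by simp
  moreover have "cnj a * cnj t = a * t" using s_eq s_real by (metis complex_cnj_mult)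
  ultimately have "cnj a = a" by simp
  thus ?thesis by (simp add: Reals_cnj_iff)
qed

lemma real_symmetric_mat_has_eigenvalue:
  fixes M :: "real mat"
  assumes M: "M \<in> carrier_mat n n" and sym: "transpose_mat M = M" and n: "0 < n"
  shows "\<exists>e. eigenvalue M e"
proof -
  let ?Mc = "map_mat complex_of_real M"
  have Mc: "?Mc \<in> carrier_mat n n" using M by auto
  obtain as where cp: "char_poly ?Mc = (\<Prod>a\<leftarrow>as. [:- a, 1:])" and len: "length as = n"
    using char_poly_factorized[OF Mc] by blast
  define a where "a = as ! 0"
  have "a \<in> set as" using len n unfolding a_def by auto
  hence root: "poly (char_poly ?Mc) a = 0" unfolding cp by (induct as) (auto simp: poly_prod_list)
  hence "eigenvalue ?Mc a" using eigenvalue_root_char_poly[OF Mc] by simp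
  hence "complex_of_real (Re a) = a" by (intro of_real_Re eigenvalue_of_real_symmetric_mat_is_real[OF M sym])
  hence "poly (char_poly ?Mc) a = poly (map_poly complex_of_real (char_poly M)) (complex_of_real (Re a))"
    by (simp only: of_real_hom.char_poly_hom[OF M])
  also have "\<dots> = complex_of_real (poly (char_poly M) (Re a))" by (rule of_real_hom.poly_map_poly)
  finally have "poly (char_poly M) (Re a) = 0" using root by simp
  thus ?thesis using eigenvalue_root_char_poly[OF M] by auto
qed

lemma exists_unit_eigenvector:
  fixes M :: "real mat"
  assumes M: "M \<in> carrier_mat n n" and e: "eigenvalue M e"
  shows "\<exists>v. v \<in> carrier_vec n \<and> v \<bullet> v = 1 \<and> M *\<^sub>v v = e \<cdot>\<^sub>v v"
proof -
  obtain u where u: "u \<in> carrier_vec n" and u0: "u \<noteq> 0\<^sub>v n" and Mu: "M *\<^sub>v u = e \<cdot>\<^sub>v u"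
    using e M unfolding eigenvalue_def eigenvector_def by auto
  have "u \<bullet> u \<noteq> 0" using conjugate_square_eq_0_vec[OF u] u0 by auto
  moreover have "u \<bullet> u \<ge> 0" unfolding scalar_prod_def by (intro sum_nonneg) auto
  ultimately have pos: "u \<bullet> u > 0" by linarith
  define v where "v = (1 / sqrt (u \<bullet> u)) \<cdot>\<^sub>v u"
  have "v \<bullet> v = 1" unfolding v_def using u pos
    by (simp add: scalar_prod_smult_distrib[of _ n])
  moreover have "M *\<^sub>v v = e \<cdot>\<^sub>v v" unfolding v_def using M u
    by (simp add: mult_mat_vec[of _ n n] Mu smult_smult_assoc mult.commute)
  moreover have "v \<in> carrier_vec n" unfolding v_def using u by simp
  ultimately show ?thesis by blast
qed

lemma orthonormal_deflation:
  fixes M :: "real mat"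
  assumes M: "M \<in> carrier_mat (Suc k) (Suc k)" and sym: "transpose_mat M = M"
    and Q: "orthonormal_mat (Suc k) Q" and ev: "M *\<^sub>v col Q 0 = e \<cdot>\<^sub>v col Q 0"
  shows "\<exists>M'. M' \<in> carrier_mat k k \<and> transpose_mat M' = M' \<and>
    transpose_mat Q * M * Q = four_block_mat (mat 1 1 (\<lambda>_. e)) (0\<^sub>m 1 k) (0\<^sub>m k 1) M'"
proof -
  note Q = orthonormal_matD[OF Q]
  define B where "B = transpose_mat Q * M * Q"
  define M' where "M' = mat k k (\<lambda>(i,j). B $$ (Suc i, Suc j))"
  have B: "B \<in> carrier_mat (Suc k) (Suc k)" unfolding B_def using M Q by auto
  have B_sym: "transpose_mat B = B"
    unfolding B_def using M Q sym
    by (simp add: transpose_mult[of _ "Suc k" "Suc k" _ "Suc k"] assoc_mult_mat[of _ "Suc k" "Suc k" _ "Suc k" _ "Suc k"])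
  have B_col0: "B $$ (i,0) = (if i = 0 then e else 0)" if "i < Suc k" for i
  proof -
    have "B $$ (i,0) = col Q i \<bullet> (M *\<^sub>v col Q 0)"
      unfolding B_def using M Q that
      by (simp add: assoc_mult_mat[of _ "Suc k" "Suc k" _ "Suc k" _ "Suc k"] mult_mat_vec_def)
    also have "\<dots> = e * (col Q i \<bullet> col Q 0)"
      unfolding ev using Q that by (simp add: scalar_prod_smult_distrib[of _ "Suc k"])
    also have "col Q i \<bullet> col Q 0 = (if i = 0 then 1 else 0)"
      using arg_cong[OF Q(2), of "\<lambda>X. X $$ (i,0)"] Q(1) that by simp
    finally show ?thesis by simp
  qed
  have "B = four_block_mat (mat 1 1 (\<lambda>_. e)) (0\<^sub>m 1 k) (0\<^sub>m k 1) M'"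
  proof (rule eq_matI)
    fix i j assume i: "i < dim_row (four_block_mat (mat 1 1 (\<lambda>_. e)) (0\<^sub>m 1 k) (0\<^sub>m k 1) M')"
      and j: "j < dim_col (four_block_mat (mat 1 1 (\<lambda>_. e)) (0\<^sub>m 1 k) (0\<^sub>m k 1) M')"
    have ij: "i < Suc k" "j < Suc k" using i j by (simp_all add: M'_def)
    have "B $$ (0,j) = B $$ (j,0)" using arg_cong[OF B_sym, of "\<lambda>X. X $$ (j,0)"] B ij(2) by simp
    thus "B $$ (i,j) = four_block_mat (mat 1 1 (\<lambda>_. e)) (0\<^sub>m 1 k) (0\<^sub>m k 1) M' $$ (i,j)"
      using ij B_col0[OF ij(1)] B_col0[OF ij(2)] unfolding M'_def by (cases i; cases j) simp_all
  qed (use B in \<open>simp_all add: M'_def\<close>)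
  moreover have "transpose_mat M' = M'"
  proof (rule eq_matI)
    fix i j assume "i < dim_row M'" "j < dim_col M'"
    hence "Suc i < Suc k" "Suc j < Suc k" by (simp_all add: M'_def)
    thus "transpose_mat M' $$ (i,j) = M' $$ (i,j)"
      using arg_cong[OF B_sym, of "\<lambda>X. X $$ (Suc i, Suc j)"] B by (simp add: M'_def)
  qed (simp_all add: M'_def)
  moreover have "M' \<in> carrier_mat k k" unfolding M'_def by simp
  ultimately show ?thesis unfolding B_def by blast
qed

lemma mult_block_diagonal_mat:
  assumes "A \<in> carrier_mat n1 n1" "A' \<in> carrier_mat n1 n1" "D \<in> carrier_mat n2 n2" "D' \<in> carrier_mat n2 n2"
  shows "four_block_mat A (0\<^sub>m n1 n2) (0\<^sub>m n2 n1) D * four_block_mat A' (0\<^sub>m n1 n2) (0\<^sub>m n2 n1) D'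
    = four_block_mat (A * A') (0\<^sub>m n1 n2) (0\<^sub>m n2 n1) (D * D')"
  using assms by (simp add: mult_four_block_mat[OF assms(1) zero_carrier_mat zero_carrier_mat assms(3)
      assms(2) zero_carrier_mat zero_carrier_mat assms(4)])

lemma transpose_block_diagonal_mat:
  assumes "A \<in> carrier_mat n1 n1" "D \<in> carrier_mat n2 n2"
  shows "transpose_mat (four_block_mat A (0\<^sub>m n1 n2) (0\<^sub>m n2 n1) D)
    = four_block_mat (transpose_mat A) (0\<^sub>m n1 n2) (0\<^sub>m n2 n1) (transpose_mat D)"
  using transpose_four_block_mat[OF assms(1) zero_carrier_mat zero_carrier_mat assms(2)] by simp

lemma orthonormal_mat_block_diagonal:
  assumes W: "orthonormal_mat k W"
  shows "orthonormal_mat (Suc k) (four_block_mat (1\<^sub>m 1) (0\<^sub>m 1 k) (0\<^sub>m k 1) W)"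
proof -
  note WC = orthonormal_matD(1)[OF W]
  have "transpose_mat (four_block_mat (1\<^sub>m 1) (0\<^sub>m 1 k) (0\<^sub>m k 1) W) * four_block_mat (1\<^sub>m 1) (0\<^sub>m 1 k) (0\<^sub>m k 1) W
      = four_block_mat (transpose_mat (1\<^sub>m 1) * 1\<^sub>m 1) (0\<^sub>m 1 k) (0\<^sub>m k 1) (transpose_mat W * W)"
    unfolding transpose_block_diagonal_mat[OF one_carrier_mat WC]
    by (rule mult_block_diagonal_mat) (use WC in auto)
  also have "\<dots> = 1\<^sub>m (Suc k)" unfolding orthonormal_matD(2)[OF W] by simp
  finally show ?thesis unfolding orthonormal_mat_def using WC by auto
qed

theorem real_symmetric_mat_orthogonally_diagonalizable:
  fixes M :: "real mat"
  assumes "M \<in> carrier_mat n n" and "transpose_mat M = M"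
  shows "\<exists>W lam. orthonormal_mat n W \<and> transpose_mat W * M * W = mat_diag n lam"
  using assms
proof (induction n arbitrary: M)
  case 0
  thus ?case
    by (intro exI[of _ "1\<^sub>m 0"] exI[of _ "\<lambda>_. 0"]) (auto simp: orthonormal_mat_def mat_diag_def intro!: eq_matI)
next
  case (Suc k M)
  note M = Suc.prems(1)
  obtain e where "eigenvalue M e" using real_symmetric_mat_has_eigenvalue Suc.prems by blast
  then obtain v where v: "v \<in> carrier_vec (Suc k)" "v \<bullet> v = 1" and Mv: "M *\<^sub>v v = e \<cdot>\<^sub>v v"
    using exists_unit_eigenvector M by blast
  obtain Q where Q: "orthonormal_mat (Suc k) Q" and Q0: "col Q 0 = v"
    using exists_orthonormal_mat_first_col[OF v] by blast
  note QC = orthonormal_matD(1)[OF Q]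
  obtain M' where M': "M' \<in> carrier_mat k k" "transpose_mat M' = M'"
    and B: "transpose_mat Q * M * Q = four_block_mat (mat 1 1 (\<lambda>_. e)) (0\<^sub>m 1 k) (0\<^sub>m k 1) M'"
    using orthonormal_deflation[OF Suc.prems Q] Mv Q0 by blast
  obtain W' lam where W': "orthonormal_mat k W'" and D': "transpose_mat W' * M' * W' = mat_diag k lam"
    using Suc.IH[OF M'] by blast
  note W'C = orthonormal_matD(1)[OF W']
  define F where "F = four_block_mat (1\<^sub>m 1) (0\<^sub>m 1 k) (0\<^sub>m k 1) W'"
  have F: "orthonormal_mat (Suc k) F" unfolding F_def by (rule orthonormal_mat_block_diagonal[OF W'])
  note FC = orthonormal_matD(1)[OF F]
  have W: "orthonormal_mat (Suc k) (Q * F)" by (rule orthonormal_mat_mult[OF Q F])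
  have FT: "transpose_mat F = four_block_mat (1\<^sub>m 1) (0\<^sub>m 1 k) (0\<^sub>m k 1) (transpose_mat W')"
    unfolding F_def using transpose_block_diagonal_mat[OF one_carrier_mat W'C] by simp
  have "transpose_mat (Q * F) * M * (Q * F) = transpose_mat F * (transpose_mat Q * M * Q) * F"
    using QC FC M
    by (simp add: transpose_mult[of _ "Suc k" "Suc k" _ "Suc k"] assoc_mult_mat[of _ "Suc k" "Suc k" _ "Suc k" _ "Suc k"])
  also have "\<dots> = four_block_mat (1\<^sub>m 1 * mat 1 1 (\<lambda>_. e)) (0\<^sub>m 1 k) (0\<^sub>m k 1) (transpose_mat W' * M') * F"
    unfolding B FT by (subst mult_block_diagonal_mat) (use W'C M'(1) in auto)
  also have "\<dots> = four_block_mat (1\<^sub>m 1 * mat 1 1 (\<lambda>_. e) * 1\<^sub>m 1) (0\<^sub>m 1 k) (0\<^sub>m k 1)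
      (transpose_mat W' * M' * W')"
    unfolding F_def by (rule mult_block_diagonal_mat) (use W'C M'(1) in auto)
  also have "\<dots> = mat_diag (Suc k) (case_nat e lam)"
    unfolding D' by (intro eq_matI) (auto simp: mat_diag_def split: nat.split)
  finally show ?case using W by blast
qed

section \<open>Singular values and the nuclear norm\<close>

lemma order_prod_linear_factors:
  fixes f :: "nat \<Rightarrow> real"
  shows "Polynomial.order x (\<Prod>i<n. [:- f i, 1:]) = card {i. i < n \<and> f i = x}"
proof (induct n)
  case 0 thus ?case by simp
next
  case (Suc n)
  have nz: "(\<Prod>i<n. [:- f i, 1:]) \<noteq> 0" by auto
  have "Polynomial.order x (\<Prod>i<Suc n. [:- f i, 1:]) = Polynomial.order x ((\<Prod>i<n. [:- f i, 1:]) * [:- f n, 1:])"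
    by (simp add: lessThan_Suc mult.commute)
  also have "\<dots> = Polynomial.order x (\<Prod>i<n. [:- f i, 1:]) + Polynomial.order x [:- f n, 1:]"
    using nz by (intro order_mult) (metis mult_eq_0_iff nz pCons_eq_0_iff one_neq_zero)
  also have "\<dots> = card {i. i < n \<and> f i = x} + (if f n = x then 1 else 0)"
    using Suc by (simp add: order_linear')
  also have "\<dots> = card {i. i < Suc n \<and> f i = x}"
  proof (cases "f n = x")
    case True
    hence "{i. i < Suc n \<and> f i = x} = insert n {i. i < n \<and> f i = x}" by auto
    thus ?thesis using True by simp
  next
    case False
    hence "{i. i < Suc n \<and> f i = x} = {i. i < n \<and> f i = x}" using less_Suc_eq by auto
    thus ?thesis using False by simp
  qed
  finally show ?case .
qed

lemma sum_roots_prod_linear_factors: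
  fixes f :: "nat \<Rightarrow> real" and n :: nat and g :: "real \<Rightarrow> real"
  defines "q \<equiv> \<Prod>i<n. [:- f i, 1:]"
  shows "(\<Sum>x\<in>{x. poly q x = 0}. real (Polynomial.order x q) * g x) = (\<Sum>i<n. g (f i))"
proof -
  have roots: "{x. poly q x = 0} = f ` {..<n}" unfolding q_def by (auto simp: poly_prod)
  have "(\<Sum>i<n. g (f i)) = (\<Sum>y\<in>f ` {..<n}. \<Sum>i\<in>{i \<in> {..<n}. f i = y}. g (f i))"
    by (rule sum.image_gen) simp
  also have "\<dots> = (\<Sum>y\<in>f ` {..<n}. real (card {i. i < n \<and> f i = y}) * g y)"
    by (intro sum.cong refl) auto
  finally show ?thesis unfolding roots unfolding q_def order_prod_linear_factors by simp
qed

lemma char_poly_orthogonally_diagonalized: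
  fixes M :: "real mat"
  assumes M: "M \<in> carrier_mat n n" and W: "orthonormal_mat n W"
    and D: "transpose_mat W * M * W = mat_diag n lam"
  shows "char_poly M = (\<Prod>i<n. [:- lam i, 1:])"
proof -
  note W = orthonormal_matD[OF W]
  have "similar_mat (mat_diag n lam) M"
    unfolding similar_mat_def
    by (intro exI[of _ "transpose_mat W"] exI[of _ W] similar_mat_witI[of _ _ n]) (use M W D in auto)
  hence "char_poly M = char_poly (mat_diag n lam)" by (rule char_poly_similar[symmetric])
  also have "\<dots> = (\<Prod>a\<leftarrow>map lam [0..<n]. [:- a, 1:])"
    by (subst char_poly_upper_triangular[of _ n])
       (auto simp: upper_triangular_def mat_diag_def diag_mat_def intro!: arg_cong[of _ _ prod_list])
  also have "\<dots> = (\<Prod>i<n. [:- lam i, 1:])"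
    by (induct n) (auto simp: lessThan_Suc mult.commute)
  finally show ?thesis .
qed

lemma gram_mat_diag_sums:
  assumes P: "P \<in> carrier_mat m n" and D: "transpose_mat P * P = mat_diag n lam"
    and i: "i < n" and j: "j < n"
  shows "(\<Sum>a<m. P $$ (a,i) * P $$ (a,j)) = (if i = j then lam i else 0)"
  using arg_cong[OF D, of "\<lambda>X. X $$ (i,j)"] P i j
  by (simp add: index_mult_mat_sum[of _ n m _ n] mat_diag_def del: index_mult_mat)

lemma singular_value_decomposition:
  fixes A :: "real mat"
  assumes A: "A \<in> carrier_mat m n"
  shows "\<exists>W lam. orthonormal_mat n W \<and> transpose_mat (A * W) * (A * W) = mat_diag n lam
    \<and> (\<forall>i<n. 0 \<le> lam i) \<and> nuclear_norm A = (\<Sum>i<n. sqrt (lam i))"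
proof -
  define M where "M = transpose_mat A * A"
  have M: "M \<in> carrier_mat n n" unfolding M_def using A by auto
  have "transpose_mat M = M" unfolding M_def using A by (simp add: transpose_mult[of _ n m _ n])
  then obtain W lam where W: "orthonormal_mat n W" and D: "transpose_mat W * M * W = mat_diag n lam"
    using real_symmetric_mat_orthogonally_diagonalizable[OF M] by blast
  note WC = orthonormal_matD(1)[OF W]
  have "transpose_mat (A * W) * (A * W) = transpose_mat W * transpose_mat A * (A * W)"
    using transpose_mult[OF A WC] by simp
  also have "\<dots> = transpose_mat W * M * W"
    unfolding M_def using A WC
    by (simp only: assoc_mult_mat[of "transpose_mat W" n n "transpose_mat A" m "A * W" n]
        assoc_mult_mat[of "transpose_mat A" n m A n W n] assoc_mult_mat[of "transpose_mat W" n n "transpose_mat A * A" n W n]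
        transpose_carrier_mat mult_carrier_mat)
  finally have AW: "transpose_mat (A * W) * (A * W) = mat_diag n lam" unfolding D .
  have AWC: "A * W \<in> carrier_mat m n" using A WC by simp
  have "0 \<le> lam i" if "i < n" for i
  proof -
    have "lam i = (\<Sum>a<m. (A * W) $$ (a,i) * (A * W) $$ (a,i))"
      using gram_mat_diag_sums[OF AWC AW that that] by simp
    thus ?thesis by (auto intro!: sum_nonneg)
  qed
  moreover have "nuclear_norm A = (\<Sum>i<n. sqrt (lam i))"
    unfolding nuclear_norm_def Let_def M_def[symmetric] char_poly_orthogonally_diagonalized[OF M W D]
    by (rule sum_roots_prod_linear_factors)
  ultimately show ?thesis using W AW by blast
qed

lemma nuclear_norm_nonneg:
  assumes "A \<in> carrier_mat m n" shows "0 \<le> nuclear_norm A"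
  using singular_value_decomposition[OF assms] by (auto intro!: sum_nonneg)

section \<open>The nuclear norm of a factorization\<close>

lemma sum_nested_rotate:
  "(\<Sum>a\<in>A. \<Sum>b\<in>B. \<Sum>k\<in>K. f a b k) = (\<Sum>k\<in>K. \<Sum>a\<in>A. \<Sum>b\<in>B. f a b k)"
proof -
  have "(\<Sum>a\<in>A. \<Sum>b\<in>B. \<Sum>k\<in>K. f a b k) = (\<Sum>a\<in>A. \<Sum>k\<in>K. \<Sum>b\<in>B. f a b k)"
    by (intro sum.cong refl sum.swap)
  also have "\<dots> = (\<Sum>k\<in>K. \<Sum>a\<in>A. \<Sum>b\<in>B. f a b k)" by (rule sum.swap)
  finally show ?thesis .
qed

definition orthonormal_on :: "nat set \<Rightarrow> nat \<Rightarrow> (nat \<Rightarrow> nat \<Rightarrow> real) \<Rightarrow> bool" where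
  "orthonormal_on I K e \<longleftrightarrow> (\<forall>i\<in>I. \<forall>j\<in>I. (\<Sum>l<K. e i l * e j l) = (if i = j then 1 else 0))"

lemma orthonormal_on_subset: "orthonormal_on I K e \<Longrightarrow> J \<subseteq> I \<Longrightarrow> orthonormal_on J K e"
  unfolding orthonormal_on_def by blast

lemma orthonormal_mat_cols:
  assumes "orthonormal_mat n W"
  shows "orthonormal_on {..<n} n (\<lambda>i l. W $$ (l,i))"
proof -
  note W = orthonormal_matD[OF assms]
  have "(\<Sum>l<n. W $$ (l,i) * W $$ (l,j)) = (transpose_mat W * W) $$ (i,j)" if "i < n" "j < n" for i j
    using W(1) that by (simp add: index_mult_mat_sum[of _ n n _ n] del: index_mult_mat)
  thus ?thesis unfolding orthonormal_on_def W(2) by auto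
qed

lemma bessel_inequality:
  assumes I: "finite I" and e: "orthonormal_on I K e"
  shows "(\<Sum>i\<in>I. (\<Sum>l<K. e i l * x l)\<^sup>2) \<le> (\<Sum>l<K. (x l)\<^sup>2)"
proof -
  define c where "c = (\<lambda>i. \<Sum>l<K. e i l * x l)"
  \<comment> \<open>\<open>s\<close> is the orthogonal projection of \<open>x\<close> onto the span of the \<open>e i\<close>\<close>
  define s where "s = (\<lambda>l. \<Sum>i\<in>I. c i * e i l)"
  have xs: "(\<Sum>l<K. x l * s l) = (\<Sum>i\<in>I. (c i)\<^sup>2)"
  proof -
    have "(\<Sum>l<K. x l * s l) = (\<Sum>l<K. \<Sum>i\<in>I. c i * (e i l * x l))"
      unfolding s_def by (simp add: sum_distrib_left mult_ac)
    also have "\<dots> = (\<Sum>i\<in>I. \<Sum>l<K. c i * (e i l * x l))" by (rule sum.swap)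
    also have "\<dots> = (\<Sum>i\<in>I. (c i)\<^sup>2)" unfolding c_def
      by (simp add: sum_distrib_left power2_eq_square)
    finally show ?thesis .
  qed
  have ss: "(\<Sum>l<K. (s l)\<^sup>2) = (\<Sum>i\<in>I. (c i)\<^sup>2)"
  proof -
    have "(\<Sum>l<K. (s l)\<^sup>2) = (\<Sum>l<K. \<Sum>i\<in>I. \<Sum>j\<in>I. c i * c j * (e i l * e j l))"
      unfolding s_def power2_eq_square by (simp add: sum_product mult_ac)
    also have "\<dots> = (\<Sum>i\<in>I. \<Sum>j\<in>I. c i * c j * (\<Sum>l<K. e i l * e j l))"
      by (subst sum_nested_rotate[symmetric]) (simp add: sum_distrib_left)
    also have "\<dots> = (\<Sum>i\<in>I. \<Sum>j\<in>I. c i * c j * (if i = j then 1 else 0))"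
      using e unfolding orthonormal_on_def by (intro sum.cong refl) auto
    also have "\<dots> = (\<Sum>i\<in>I. (c i)\<^sup>2)"
      using I by (simp add: power2_eq_square if_distrib cong: if_cong)
    finally show ?thesis .
  qed
  have "0 \<le> (\<Sum>l<K. (x l - s l)\<^sup>2)" by (intro sum_nonneg) auto
  also have "\<dots> = (\<Sum>l<K. (x l)\<^sup>2) - 2 * (\<Sum>l<K. x l * s l) + (\<Sum>l<K. (s l)\<^sup>2)"
    by (simp add: power2_diff sum_subtractf sum.distrib sum_distrib_left mult_ac)
  finally show ?thesis unfolding xs ss c_def by simp
qed

lemma sum_mult_le_sqrt_sum_squares:
  fixes f g :: "'a \<Rightarrow> real"
  shows "(\<Sum>i\<in>I. f i * g i) \<le> sqrt (\<Sum>i\<in>I. (f i)\<^sup>2) * sqrt (\<Sum>i\<in>I. (g i)\<^sup>2)"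
proof -
  have "(\<Sum>i\<in>I. f i * g i) \<le> (\<Sum>i\<in>I. \<bar>f i\<bar> * \<bar>g i\<bar>)"
    by (intro sum_mono) (simp add: abs_mult[symmetric])
  also have "\<dots> \<le> L2_set f I * L2_set g I" by (rule L2_set_mult_ineq)
  finally show ?thesis unfolding L2_set_def .
qed

lemma orthonormal_on_pairing_le:
  fixes u v :: "nat \<Rightarrow> nat \<Rightarrow> real"
  assumes I: "finite I" and z: "orthonormal_on I m z" and w: "orthonormal_on I n w"
  shows "(\<Sum>i\<in>I. \<Sum>k<d. (\<Sum>a<m. z i a * u a k) * (\<Sum>b<n. w i b * v b k))
    \<le> (\<Sum>k<d. sqrt (\<Sum>a<m. (u a k)\<^sup>2) * sqrt (\<Sum>b<n. (v b k)\<^sup>2))"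
proof -
  have "(\<Sum>i\<in>I. \<Sum>k<d. (\<Sum>a<m. z i a * u a k) * (\<Sum>b<n. w i b * v b k))
      = (\<Sum>k<d. \<Sum>i\<in>I. (\<Sum>a<m. z i a * u a k) * (\<Sum>b<n. w i b * v b k))"
    by (rule sum.swap)
  also have "\<dots> \<le> (\<Sum>k<d. sqrt (\<Sum>i\<in>I. (\<Sum>a<m. z i a * u a k)\<^sup>2)
                         * sqrt (\<Sum>i\<in>I. (\<Sum>b<n. w i b * v b k)\<^sup>2))"
    by (intro sum_mono sum_mult_le_sqrt_sum_squares)
  also have "\<dots> \<le> (\<Sum>k<d. sqrt (\<Sum>a<m. (u a k)\<^sup>2) * sqrt (\<Sum>b<n. (v b k)\<^sup>2))"
    by (intro sum_mono mult_mono real_sqrt_le_mono bessel_inequality[OF I z]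
          bessel_inequality[OF I w]) (auto intro!: sum_nonneg)
  finally show ?thesis .
qed

lemma index_mult_transpose_mat_sum:
  assumes "U \<in> carrier_mat m d" "V \<in> carrier_mat n d" "a < m" "b < n"
  shows "(U * transpose_mat V) $$ (a,b) = (\<Sum>k<d. U $$ (a,k) * V $$ (b,k))"
  using assms by (auto simp: scalar_prod_def atLeast0LessThan intro!: sum.cong)

definition col_sqnorm :: "real mat \<Rightarrow> nat \<Rightarrow> real" where
  "col_sqnorm U k = (\<Sum>a<dim_row U. (U $$ (a,k))\<^sup>2)"

lemma nuclear_norm_eq_singular_pairing:
  fixes A :: "real mat"
  assumes A: "A \<in> carrier_mat m n"
  shows "\<exists>I z w. finite I \<and> orthonormal_on I m z \<and> orthonormal_on I n w
    \<and> nuclear_norm A = (\<Sum>i\<in>I. \<Sum>a<m. \<Sum>b<n. z i a * A $$ (a,b) * w i b)"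
proof -
  obtain W lam where W: "orthonormal_mat n W"
    and D: "transpose_mat (A * W) * (A * W) = mat_diag n lam"
    and lam: "\<forall>i<n. 0 \<le> lam i" and nuc: "nuclear_norm A = (\<Sum>i<n. sqrt (lam i))"
    using singular_value_decomposition[OF A] by blast
  note WC = orthonormal_matD(1)[OF W]
  have AWC: "A * W \<in> carrier_mat m n" using A WC by simp
  define I where "I = {i. i < n \<and> 0 < lam i}"
  define z where "z = (\<lambda>i a. (A * W) $$ (a,i) / sqrt (lam i))"
  define w where "w = (\<lambda>i l. W $$ (l,i))"
  have AW: "(\<Sum>a<m. (A * W) $$ (a,i) * (A * W) $$ (a,j)) = (if i = j then lam i else 0)"
    if "i < n" "j < n" for i j
    using gram_mat_diag_sums[OF AWC D that] by simp
  have z: "orthonormal_on I m z"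
    unfolding orthonormal_on_def z_def I_def
    by (auto simp: sum_divide_distrib[symmetric] AW real_sqrt_mult[symmetric])
  have w: "orthonormal_on I n w"
    unfolding w_def by (rule orthonormal_on_subset[OF orthonormal_mat_cols[OF W]]) (auto simp: I_def)
  have sv: "sqrt (lam i) = (\<Sum>a<m. \<Sum>b<n. z i a * A $$ (a,b) * w i b)" if "i \<in> I" for i
  proof -
    have i: "i < n" "0 < lam i" using that unfolding I_def by auto
    have "sqrt (lam i) = (\<Sum>a<m. z i a * (A * W) $$ (a,i))"
      using AW[OF i(1) i(1)] i unfolding z_def
      by (simp add: sum_divide_distrib[symmetric] real_div_sqrt)
    also have "\<dots> = (\<Sum>a<m. \<Sum>b<n. z i a * A $$ (a,b) * w i b)"
      unfolding w_def using i
      by (intro sum.cong refl) (simp add: index_mult_mat_sum[OF A WC _ i(1)] sum_distrib_left mult_ac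
          del: index_mult_mat)
    finally show ?thesis .
  qed
  have "nuclear_norm A = (\<Sum>i\<in>I. sqrt (lam i))"
    unfolding nuc I_def by (rule sum.mono_neutral_right) (use lam in auto)
  also have "\<dots> = (\<Sum>i\<in>I. \<Sum>a<m. \<Sum>b<n. z i a * A $$ (a,b) * w i b)"
    by (rule sum.cong[OF refl sv])
  finally have "nuclear_norm A = (\<Sum>i\<in>I. \<Sum>a<m. \<Sum>b<n. z i a * A $$ (a,b) * w i b)" .
  moreover have "finite I" unfolding I_def by simp
  ultimately show ?thesis using z w by blast
qed

lemma nuclear_norm_mult_transpose_le:
  fixes U V :: "real mat"
  assumes U: "U \<in> carrier_mat m d" and V: "V \<in> carrier_mat n d"
  shows "nuclear_norm (U * transpose_mat V) \<le> (\<Sum>k<d. sqrt (col_sqnorm U k) * sqrt (col_sqnorm V k))"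
proof -
  have UV: "U * transpose_mat V \<in> carrier_mat m n" using U V by auto
  obtain I z w where I: "finite I" and z: "orthonormal_on I m z" and w: "orthonormal_on I n w"
    and nuc: "nuclear_norm (U * transpose_mat V)
      = (\<Sum>i\<in>I. \<Sum>a<m. \<Sum>b<n. z i a * (U * transpose_mat V) $$ (a,b) * w i b)"
    using nuclear_norm_eq_singular_pairing[OF UV] by blast
  have pairing: "(\<Sum>a<m. \<Sum>b<n. z i a * (U * transpose_mat V) $$ (a,b) * w i b)
      = (\<Sum>k<d. (\<Sum>a<m. z i a * U $$ (a,k)) * (\<Sum>b<n. w i b * V $$ (b,k)))" for i
  proof -
    have "(\<Sum>a<m. \<Sum>b<n. z i a * (U * transpose_mat V) $$ (a,b) * w i b)
        = (\<Sum>a<m. \<Sum>b<n. \<Sum>k<d. z i a * U $$ (a,k) * (w i b * V $$ (b,k)))"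
      by (intro sum.cong refl) (simp add: index_mult_transpose_mat_sum[OF U V] sum_distrib_left
          sum_distrib_right mult_ac del: index_mult_mat)
    also have "\<dots> = (\<Sum>k<d. (\<Sum>a<m. z i a * U $$ (a,k)) * (\<Sum>b<n. w i b * V $$ (b,k)))"
      by (subst sum_nested_rotate) (simp add: sum_product)
    finally show ?thesis .
  qed
  have "nuclear_norm (U * transpose_mat V)
      = (\<Sum>i\<in>I. \<Sum>k<d. (\<Sum>a<m. z i a * U $$ (a,k)) * (\<Sum>b<n. w i b * V $$ (b,k)))"
    by (simp only: nuc pairing)
  also have "\<dots> \<le> (\<Sum>k<d. sqrt (\<Sum>a<m. (U $$ (a,k))\<^sup>2) * sqrt (\<Sum>b<n. (V $$ (b,k))\<^sup>2))"
    by (rule orthonormal_on_pairing_le[OF I z w])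
  finally show ?thesis unfolding col_sqnorm_def using U V by simp
qed

definition dropout_penalty :: "real mat \<Rightarrow> real mat \<Rightarrow> real" where
  "dropout_penalty U V = real (dim_col U) * (\<Sum>k<dim_col U. col_sqnorm U k * col_sqnorm V k)"

lemma nuclear_norm_sq_le_dropout_penalty:
  assumes U: "U \<in> carrier_mat m d" and V: "V \<in> carrier_mat n d"
  shows "(nuclear_norm (U * transpose_mat V))\<^sup>2 \<le> dropout_penalty U V"
proof -
  define x where "x = (\<lambda>k. sqrt (col_sqnorm U k) * sqrt (col_sqnorm V k))"
  have x2: "(x k)\<^sup>2 = col_sqnorm U k * col_sqnorm V k" for k
    unfolding x_def col_sqnorm_def by (simp add: power_mult_distrib sum_nonneg)
  have "(nuclear_norm (U * transpose_mat V))\<^sup>2 \<le> (\<Sum>k<d. 1 * x k)\<^sup>2"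
    using nuclear_norm_mult_transpose_le[OF U V] nuclear_norm_nonneg[of _ m n] U V
    unfolding x_def by (simp add: power_mono)
  also have "\<dots> \<le> (\<Sum>k<d. 1\<^sup>2) * (\<Sum>k<d. (x k)\<^sup>2)" by (rule Cauchy_Schwarz_ineq_sum)
  finally show ?thesis unfolding dropout_penalty_def x2 using U by simp
qed

section \<open>The expected dropout loss\<close>

abbreviation bernoulli_vec_pmf :: "nat \<Rightarrow> real \<Rightarrow> (nat \<Rightarrow> bool) pmf" where
  "bernoulli_vec_pmf d q \<equiv> Pi_pmf {..<d} False (\<lambda>_. bernoulli_pmf q)"

lemma finite_set_bernoulli_vec_pmf: "finite (set_pmf (bernoulli_vec_pmf d q))"
proof -
  have "finite (PiE_dflt {..<d} False (set_pmf \<circ> (\<lambda>_. bernoulli_pmf q)))"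
    by (rule finite_PiE_dflt) auto
  thus ?thesis using set_Pi_pmf_subset'[of "{..<d}" False "\<lambda>_. bernoulli_pmf q"]
    by (auto intro: finite_subset)
qed

lemma integrable_bernoulli_vec_pmf: "integrable (measure_pmf (bernoulli_vec_pmf d q)) (f :: _ \<Rightarrow> real)"
  by (rule integrable_measure_pmf_finite[OF finite_set_bernoulli_vec_pmf])

lemma expectation_prod_bernoulli_vec_pmf:
  assumes q: "0 \<le> q" "q \<le> 1" and S: "S \<subseteq> {..<d}"
  shows "measure_pmf.expectation (bernoulli_vec_pmf d q) (\<lambda>r. \<Prod>x\<in>S. of_bool (r x) :: real)
    = q ^ card S"
proof -
  have restrict: "(\<Prod>x\<in>{..<d}. if x \<in> S then f x else 1) = (\<Prod>x\<in>S. f x)" for f :: "nat \<Rightarrow> real"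
    using S by (simp add: prod.inter_restrict[symmetric] Int_absorb1)
  have "measure_pmf.expectation (bernoulli_vec_pmf d q) (\<lambda>r. \<Prod>x\<in>S. of_bool (r x) :: real)
      = (\<Prod>x\<in>{..<d}. measure_pmf.expectation (bernoulli_pmf q) (\<lambda>v. if x \<in> S then of_bool v else 1))"
    unfolding restrict[of "\<lambda>x. of_bool (_ x)", symmetric]
    by (rule expectation_prod_Pi_pmf) (auto intro: integrable_measure_pmf_finite)
  also have "\<dots> = (\<Prod>x\<in>{..<d}. if x \<in> S then q else 1)"
    using q by (intro prod.cong refl) auto
  finally show ?thesis by (simp add: restrict)
qed

lemma expectation_bernoulli_vec_pmf_moments:
  assumes q: "0 \<le> q" "q \<le> 1" and k: "k < d" and l: "l < d"
  shows "measure_pmf.expectation (bernoulli_vec_pmf d q) (\<lambda>r. of_bool (r k) :: real) = q"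
    and "measure_pmf.expectation (bernoulli_vec_pmf d q) (\<lambda>r. of_bool (r k) * of_bool (r l) :: real)
      = (if k = l then q else q\<^sup>2)"
proof -
  show first: "measure_pmf.expectation (bernoulli_vec_pmf d q) (\<lambda>r. of_bool (r k) :: real) = q"
    using expectation_prod_bernoulli_vec_pmf[OF q, of "{k}"] k by simp
  show "measure_pmf.expectation (bernoulli_vec_pmf d q) (\<lambda>r. of_bool (r k) * of_bool (r l) :: real)
      = (if k = l then q else q\<^sup>2)"
  proof (cases "k = l")
    case True
    hence "(\<lambda>r. of_bool (r k) * of_bool (r l) :: real) = (\<lambda>r. of_bool (r k))" by (auto simp: fun_eq_iff)
    thus ?thesis using first True by simp
  next
    case False
    hence "(\<lambda>r. of_bool (r k) * of_bool (r l) :: real) = (\<lambda>r. \<Prod>x\<in>{k,l}. of_bool (r x))" by auto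
    thus ?thesis using expectation_prod_bernoulli_vec_pmf[OF q, of "{k,l}"] k l False
      by (simp add: power2_eq_square)
  qed
qed

lemma sum_second_moments:
  fixes t :: "nat \<Rightarrow> real"
  shows "(\<Sum>k<d. \<Sum>l<d. t k * t l * (if k = l then q else q\<^sup>2))
    = q\<^sup>2 * (\<Sum>k<d. t k)\<^sup>2 + (q - q\<^sup>2) * (\<Sum>k<d. (t k)\<^sup>2)"
proof -
  have "(\<Sum>k<d. \<Sum>l<d. t k * t l * (if k = l then q else q\<^sup>2))
      = (\<Sum>k<d. \<Sum>l<d. q\<^sup>2 * (t k * t l) + (if k = l then (q - q\<^sup>2) * (t k * t l) else 0))"
    by (intro sum.cong refl) (auto simp: algebra_simps)
  also have "\<dots> = q\<^sup>2 * (\<Sum>k<d. \<Sum>l<d. t k * t l) + (q - q\<^sup>2) * (\<Sum>k<d. t k * t k)"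
    by (simp add: sum.distrib sum_distrib_left)
  also have "\<dots> = q\<^sup>2 * (\<Sum>k<d. t k)\<^sup>2 + (q - q\<^sup>2) * (\<Sum>k<d. (t k)\<^sup>2)"
    by (simp add: power2_eq_square sum_product)
  finally show ?thesis .
qed

lemma expectation_inverted_dropout_sq:
  fixes t :: "nat \<Rightarrow> real"
  assumes q: "0 < q" "q \<le> 1"
  shows "measure_pmf.expectation (bernoulli_vec_pmf d q)
           (\<lambda>r. (x - (1/q) * (\<Sum>k<d. t k * of_bool (r k)))\<^sup>2)
         = (x - (\<Sum>k<d. t k))\<^sup>2 + (1/q - 1) * (\<Sum>k<d. (t k)\<^sup>2)"
proof -
  let ?E = "measure_pmf.expectation (bernoulli_vec_pmf d q)"
  define R where "R = (\<lambda>(r :: nat \<Rightarrow> bool) k. of_bool (r k) :: real)"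
  note moments = expectation_bernoulli_vec_pmf_moments[OF less_imp_le[OF q(1)] q(2)]
  have E1: "?E (\<lambda>r. R r k) = q" and E2: "?E (\<lambda>r. R r k * R r l) = (if k = l then q else q\<^sup>2)"
    if "k < d" "l < d" for k l
    unfolding R_def using moments[OF that] by simp_all
  have square: "(x - (1/q) * Y)\<^sup>2 = x\<^sup>2 - (2 * x / q) * Y + (1/q)\<^sup>2 * Y\<^sup>2" for Y
    using q by (simp add: power2_eq_square field_simps)
  have "?E (\<lambda>r. (x - (1/q) * (\<Sum>k<d. t k * R r k))\<^sup>2)
      = ?E (\<lambda>r. x\<^sup>2 - (2 * x / q) * (\<Sum>k<d. t k * R r k)
          + (1/q)\<^sup>2 * (\<Sum>k<d. \<Sum>l<d. t k * t l * (R r k * R r l)))"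
    unfolding square by (simp add: power2_eq_square sum_product mult_ac)
  also have "\<dots> = x\<^sup>2 - (2 * x / q) * (\<Sum>k<d. t k * ?E (\<lambda>r. R r k))
        + (1/q)\<^sup>2 * (\<Sum>k<d. \<Sum>l<d. t k * t l * ?E (\<lambda>r. R r k * R r l))"
    by (simp add: integrable_bernoulli_vec_pmf integral_sum integral_diff integral_add)
  also have "\<dots> = x\<^sup>2 - (2 * x / q) * (\<Sum>k<d. t k * q)
        + (1/q)\<^sup>2 * (\<Sum>k<d. \<Sum>l<d. t k * t l * (if k = l then q else q\<^sup>2))"
    by (simp add: E1 E2)
  also have "(\<Sum>k<d. \<Sum>l<d. t k * t l * (if k = l then q else q\<^sup>2))
      = q\<^sup>2 * (\<Sum>k<d. t k)\<^sup>2 + (q - q\<^sup>2) * (\<Sum>k<d. (t k)\<^sup>2)"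
    by (rule sum_second_moments)
  also have "x\<^sup>2 - (2 * x / q) * (\<Sum>k<d. t k * q)
        + (1/q)\<^sup>2 * (q\<^sup>2 * (\<Sum>k<d. t k)\<^sup>2 + (q - q\<^sup>2) * (\<Sum>k<d. (t k)\<^sup>2))
      = (x - (\<Sum>k<d. t k))\<^sup>2 + (1/q - 1) * (\<Sum>k<d. (t k)\<^sup>2)"
    using q by (simp add: sum_distrib_right[symmetric] sum_distrib_left[symmetric] power2_diff field_simps
        power2_eq_square)
  finally show ?thesis unfolding R_def .
qed

lemma theta_bounds:
  assumes "0 < p" "p < 1"
  shows "0 < theta p d" "theta p d \<le> 1" "1 / theta p d - 1 = real d * (1 - p) / p"
proof -
  have den: "real d - (real d - 1) * p = real d * (1 - p) + p" by (simp add: algebra_simps)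
  have "0 \<le> real d * (1 - p)" using assms by simp
  hence pos: "0 < real d - (real d - 1) * p" and le: "p \<le> real d - (real d - 1) * p"
    unfolding den using assms by linarith+
  show "0 < theta p d" unfolding theta_def using assms pos by simp
  show "theta p d \<le> 1" unfolding theta_def using pos le by simp
  show "1 / theta p d - 1 = real d * (1 - p) / p" unfolding theta_def using assms pos
    by (simp add: field_simps)
qed

lemma index_dropout_mat:
  assumes X: "X \<in> carrier_mat m n" and U: "U \<in> carrier_mat m d" and V: "V \<in> carrier_mat n d"
    and a: "a < m" and b: "b < n"
  shows "(X - c \<cdot>\<^sub>m (U * diag_bool d r * transpose_mat V)) $$ (a,b)
     = X $$ (a,b) - c * (\<Sum>k<d. (U $$ (a,k) * V $$ (b,k)) * of_bool (r k))"
proof -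
  have D: "diag_bool d r \<in> carrier_mat d d" unfolding diag_bool_def by auto
  have UD: "U * diag_bool d r \<in> carrier_mat m d" using U D by auto
  have UDl: "(U * diag_bool d r) $$ (a,l) = U $$ (a,l) * of_bool (r l)" if "l < d" for l
  proof -
    have "(U * diag_bool d r) $$ (a,l) = (\<Sum>k<d. U $$ (a,k) * (if k = l then of_bool (r l) else 0))"
      using that by (subst index_mult_mat_sum[OF U D a that]) (auto simp: diag_bool_def intro!: sum.cong)
    also have "\<dots> = (\<Sum>k<d. if k = l then U $$ (a,l) * of_bool (r l) else 0)"
      by (intro sum.cong refl) auto
    finally show ?thesis using that by simp
  qed
  have "(U * diag_bool d r * transpose_mat V) $$ (a,b)
      = (\<Sum>k<d. (U * diag_bool d r) $$ (a,k) * transpose_mat V $$ (k,b))"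
    by (rule index_mult_mat_sum[OF UD _ a b]) (use V in simp)
  also have "\<dots> = (\<Sum>k<d. (U $$ (a,k) * V $$ (b,k)) * of_bool (r k))"
    using V b by (intro sum.cong refl) (simp add: UDl mult_ac)
  finally show ?thesis using X U V a b by simp
qed

lemma frob_sq_carrier:
  "M \<in> carrier_mat m n \<Longrightarrow> frob_sq M = (\<Sum>a<m. \<Sum>b<n. (M $$ (a,b))\<^sup>2)"
  unfolding frob_sq_def by auto

lemma sum_col_sqnorm_products:
  assumes "U \<in> carrier_mat m d" "V \<in> carrier_mat n d"
  shows "(\<Sum>a<m. \<Sum>b<n. \<Sum>k<d. (U $$ (a,k) * V $$ (b,k))\<^sup>2) = (\<Sum>k<d. col_sqnorm U k * col_sqnorm V k)"
  using assms unfolding col_sqnorm_def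
  by (subst sum_nested_rotate) (simp add: power_mult_distrib sum_product)

lemma frob_sq_minus_mult_transpose:
  assumes X: "X \<in> carrier_mat m n" and U: "U \<in> carrier_mat m d" and V: "V \<in> carrier_mat n d"
  shows "frob_sq (X - U * transpose_mat V) = (\<Sum>a<m. \<Sum>b<n. (X $$ (a,b) - (\<Sum>k<d. U $$ (a,k) * V $$ (b,k)))\<^sup>2)"
proof -
  have UV: "U * transpose_mat V \<in> carrier_mat m n" using U V by auto
  hence "frob_sq (X - U * transpose_mat V) = (\<Sum>a<m. \<Sum>b<n. ((X - U * transpose_mat V) $$ (a,b))\<^sup>2)"
    by (rule frob_sq_carrier[OF minus_carrier_mat])
  also have "\<dots> = (\<Sum>a<m. \<Sum>b<n. (X $$ (a,b) - (\<Sum>k<d. U $$ (a,k) * V $$ (b,k)))\<^sup>2)"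
    using UV by (intro sum.cong refl) (simp add: index_mult_transpose_mat_sum[OF U V] del: index_mult_mat)
  finally show ?thesis .
qed

lemma dropout_obj_eq_penalized:
  fixes X U V :: "real mat"
  assumes p: "0 < p" "p < 1" and X: "X \<in> carrier_mat m n"
    and U: "U \<in> carrier_mat m d" and V: "V \<in> carrier_mat n d"
  shows "dropout_obj p X d U V = frob_sq (X - U * transpose_mat V) + (1 - p) / p * dropout_penalty U V"
proof -
  define q where "q = theta p d"
  note th = theta_bounds[OF p, of d, folded q_def]
  define t where "t = (\<lambda>a b k. U $$ (a,k) * V $$ (b,k))"
  have "frob_sq (X - (1/q) \<cdot>\<^sub>m (U * diag_bool d r * transpose_mat V))
      = (\<Sum>a<m. \<Sum>b<n. (X $$ (a,b) - (1/q) * (\<Sum>k<d. t a b k * of_bool (r k)))\<^sup>2)" for r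
  proof -
    have "X - (1/q) \<cdot>\<^sub>m (U * diag_bool d r * transpose_mat V) \<in> carrier_mat m n"
      using X U V by (auto simp: diag_bool_def)
    thus ?thesis unfolding t_def
      by (subst frob_sq_carrier) (auto simp: index_dropout_mat[OF X U V] intro!: sum.cong)
  qed
  hence "dropout_obj p X d U V = measure_pmf.expectation (bernoulli_vec_pmf d q)
     (\<lambda>r. \<Sum>a<m. \<Sum>b<n. (X $$ (a,b) - (1/q) * (\<Sum>k<d. t a b k * of_bool (r k)))\<^sup>2)"
    unfolding dropout_obj_def q_def by simp
  also have "\<dots> = (\<Sum>a<m. \<Sum>b<n. (X $$ (a,b) - (\<Sum>k<d. t a b k))\<^sup>2 + (1/q - 1) * (\<Sum>k<d. (t a b k)\<^sup>2))"
  proof -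
    have linear: "measure_pmf.expectation (bernoulli_vec_pmf d q) (\<lambda>r. \<Sum>a<m. \<Sum>b<n. g a b r)
        = (\<Sum>a<m. \<Sum>b<n. measure_pmf.expectation (bernoulli_vec_pmf d q) (g a b))"
      for g :: "nat \<Rightarrow> nat \<Rightarrow> (nat \<Rightarrow> bool) \<Rightarrow> real"
      by (simp add: integral_sum integrable_bernoulli_vec_pmf)
    show ?thesis by (subst linear) (simp only: expectation_inverted_dropout_sq[OF th(1,2)])
  qed
  also have "\<dots> = (\<Sum>a<m. \<Sum>b<n. (X $$ (a,b) - (\<Sum>k<d. t a b k))\<^sup>2)
      + (1/q - 1) * (\<Sum>a<m. \<Sum>b<n. \<Sum>k<d. (t a b k)\<^sup>2)"
    by (simp add: sum.distrib sum_distrib_left)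
  also have "(\<Sum>a<m. \<Sum>b<n. (X $$ (a,b) - (\<Sum>k<d. t a b k))\<^sup>2) = frob_sq (X - U * transpose_mat V)"
    unfolding t_def by (rule frob_sq_minus_mult_transpose[OF X U V, symmetric])
  also have "(\<Sum>a<m. \<Sum>b<n. \<Sum>k<d. (t a b k)\<^sup>2) = (\<Sum>k<d. col_sqnorm U k * col_sqnorm V k)"
    unfolding t_def by (rule sum_col_sqnorm_products[OF U V])
  finally show ?thesis unfolding dropout_penalty_def th(3) using U by (simp add: field_simps)
qed

section \<open>Factorizations approaching the nuclear norm\<close>

lemma sum_concat_replicate_nth:
  fixes F :: "nat \<Rightarrow> real" and c :: "nat \<Rightarrow> nat" and r :: nat
  defines "idx \<equiv> concat (map (\<lambda>i. replicate (c i) i) [0..<r])"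
  shows "(\<Sum>k<length idx. F (idx ! k)) = (\<Sum>i<r. real (c i) * F i)"
proof -
  have "(\<Sum>k<length idx. F (idx ! k)) = sum_list (map F idx)"
    by (simp add: sum_list_sum_nth atLeast0LessThan)
  also have "\<dots> = (\<Sum>i<r. real (c i) * F i)"
    unfolding idx_def by (induct r) (auto simp: sum_list_replicate lessThan_Suc)
  finally show ?thesis .
qed

text \<open>Splitting the rank-one term \<open>a\<^sub>i b\<^sub>i\<^sup>T\<close> into \<open>c\<^sub>i\<close> equal columns \<open>(a\<^sub>i / c\<^sub>i, b\<^sub>i)\<close>
  keeps the product and divides its contribution to the penalty by \<open>c\<^sub>i\<close>.\<close>

lemma factorization_with_repeated_columns:
  fixes a b :: "nat \<Rightarrow> nat \<Rightarrow> real" and c :: "nat \<Rightarrow> nat"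
  assumes c: "\<And>i. i < r \<Longrightarrow> 0 < c i"
  shows "\<exists>U V. U \<in> carrier_mat m (\<Sum>i<r. c i) \<and> V \<in> carrier_mat n (\<Sum>i<r. c i)
    \<and> (\<forall>x<m. \<forall>y<n. (U * transpose_mat V) $$ (x,y) = (\<Sum>i<r. a i x * b i y))
    \<and> (\<Sum>k<(\<Sum>i<r. c i). col_sqnorm U k * col_sqnorm V k)
        = (\<Sum>i<r. (\<Sum>x<m. (a i x)\<^sup>2) * (\<Sum>y<n. (b i y)\<^sup>2) / real (c i))"
proof -
  define idx where "idx = concat (map (\<lambda>i. replicate (c i) i) [0..<r])"
  define d where "d = length idx"
  have d: "d = (\<Sum>i<r. c i)" unfolding d_def idx_def by (induct r) (auto simp: lessThan_Suc)
  have sum_idx: "(\<Sum>k<d. F (idx ! k)) = (\<Sum>i<r. real (c i) * F i)" for F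
    unfolding d_def idx_def by (rule sum_concat_replicate_nth)
  have idx: "idx ! k < r" if "k < d" for k
    using nth_mem[of k idx] that unfolding d_def idx_def by auto
  define U where "U = mat m d (\<lambda>(x,k). a (idx ! k) x / real (c (idx ! k)))"
  define V where "V = mat n d (\<lambda>(y,k). b (idx ! k) y)"
  have UV: "U \<in> carrier_mat m d" "V \<in> carrier_mat n d" unfolding U_def V_def by auto
  have "(U * transpose_mat V) $$ (x,y) = (\<Sum>i<r. a i x * b i y)" if "x < m" "y < n" for x y
  proof -
    have "(U * transpose_mat V) $$ (x,y) = (\<Sum>k<d. (\<lambda>i. a i x / real (c i) * b i y) (idx ! k))"
      using that by (subst index_mult_transpose_mat_sum[OF UV that]) (simp add: U_def V_def)
    also have "\<dots> = (\<Sum>i<r. real (c i) * (a i x / real (c i) * b i y))"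
      by (rule sum_idx)
    also have "\<dots> = (\<Sum>i<r. a i x * b i y)"
      using c by (intro sum.cong refl) simp
    finally show ?thesis .
  qed
  moreover have "(\<Sum>k<d. col_sqnorm U k * col_sqnorm V k)
      = (\<Sum>i<r. (\<Sum>x<m. (a i x)\<^sup>2) * (\<Sum>y<n. (b i y)\<^sup>2) / real (c i))"
  proof -
    have "(\<Sum>k<d. col_sqnorm U k * col_sqnorm V k)
        = (\<Sum>k<d. (\<lambda>i. (\<Sum>x<m. (a i x / real (c i))\<^sup>2) * (\<Sum>y<n. (b i y)\<^sup>2)) (idx ! k))"
      by (intro sum.cong refl) (auto simp: col_sqnorm_def U_def V_def)
    also have "\<dots> = (\<Sum>i<r. real (c i) * ((\<Sum>x<m. (a i x / real (c i))\<^sup>2) * (\<Sum>y<n. (b i y)\<^sup>2)))"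
      by (rule sum_idx)
    also have "\<dots> = (\<Sum>i<r. (\<Sum>x<m. (a i x)\<^sup>2) * (\<Sum>y<n. (b i y)\<^sup>2) / real (c i))"
      using c by (intro sum.cong refl) (simp add: power_divide sum_divide_distrib[symmetric] power2_eq_square)
    finally show ?thesis .
  qed
  ultimately show ?thesis using UV unfolding d by blast
qed

text \<open>With \<open>c\<^sub>i \<approx> N \<sigma>\<^sub>i\<close> columns for the \<open>i\<close>-th singular value, Cauchy-Schwarz
  \<open>(\<Sum> c\<^sub>i) (\<Sum> \<sigma>\<^sub>i\<^sup>2 / c\<^sub>i) \<ge> (\<Sum> \<sigma>\<^sub>i)\<^sup>2\<close> becomes an equality up to \<open>O(1/N)\<close>.\<close>

lemma ceiling_multiplicities_bound:
  fixes \<sigma> :: "nat \<Rightarrow> real" and N r :: nat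
  assumes \<sigma>: "\<And>i. 0 \<le> \<sigma> i" and N: "0 < N"
  defines "c \<equiv> \<lambda>i. nat \<lceil>real N * \<sigma> i\<rceil> + 1"
  shows "(\<Sum>i<r. real (c i)) * (\<Sum>i<r. (\<sigma> i)\<^sup>2 / real (c i))
    \<le> (\<Sum>i<r. \<sigma> i)\<^sup>2 + 2 * real r * (\<Sum>i<r. \<sigma> i) / real N"
proof -
  define S where "S = (\<Sum>i<r. \<sigma> i)"
  have S: "0 \<le> S" unfolding S_def by (intro sum_nonneg \<sigma>)
  have c_lower: "real N * \<sigma> i \<le> real (c i)" for i unfolding c_def by linarith
  have c_upper: "real (c i) \<le> real N * \<sigma> i + 2" for i
  proof -
    have "0 \<le> real N * \<sigma> i" using \<sigma>[of i] by simp
    hence "real (nat \<lceil>real N * \<sigma> i\<rceil>) \<le> real N * \<sigma> i + 1" by linarith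
    thus ?thesis unfolding c_def by simp
  qed
  have c_pos: "0 < real (c i)" for i unfolding c_def by simp
  have "(\<sigma> i)\<^sup>2 / real (c i) \<le> \<sigma> i / real N" for i
  proof -
    have "\<sigma> i * (real N * \<sigma> i) \<le> \<sigma> i * real (c i)" by (rule mult_left_mono[OF c_lower \<sigma>])
    thus ?thesis using N c_pos[of i] by (simp add: field_simps power2_eq_square)
  qed
  hence "(\<Sum>i<r. (\<sigma> i)\<^sup>2 / real (c i)) \<le> S / real N"
    unfolding S_def sum_divide_distrib by (intro sum_mono)
  moreover have "(\<Sum>i<r. real (c i)) \<le> real N * S + 2 * real r"
  proof -
    have "(\<Sum>i<r. real (c i)) \<le> (\<Sum>i<r. real N * \<sigma> i + 2)" by (intro sum_mono c_upper)
    thus ?thesis unfolding S_def by (simp add: sum.distrib sum_distrib_left)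
  qed
  ultimately have "(\<Sum>i<r. real (c i)) * (\<Sum>i<r. (\<sigma> i)\<^sup>2 / real (c i)) \<le> (real N * S + 2 * real r) * (S / real N)"
    by (intro mult_mono) (auto intro!: sum_nonneg simp: S c_pos less_imp_le)
  also have "\<dots> = S\<^sup>2 + 2 * real r * S / real N" using N by (simp add: field_simps power2_eq_square)
  finally show ?thesis unfolding S_def .
qed

lemma factorization_with_multiplicities:
  fixes A :: "real mat" and c :: "nat \<Rightarrow> nat"
  assumes A: "A \<in> carrier_mat m n" and W: "orthonormal_mat n W"
    and D: "transpose_mat (A * W) * (A * W) = mat_diag n lam" and c: "\<And>i. i < n \<Longrightarrow> 0 < c i"
  shows "\<exists>U V. U \<in> carrier_mat m (\<Sum>i<n. c i) \<and> V \<in> carrier_mat n (\<Sum>i<n. c i)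
    \<and> U * transpose_mat V = A \<and> dropout_penalty U V = (\<Sum>i<n. real (c i)) * (\<Sum>i<n. lam i / real (c i))"
proof -
  note WC = orthonormal_matD(1)[OF W]
  have AWC: "A * W \<in> carrier_mat m n" using A WC by simp
  obtain U V where UV: "U \<in> carrier_mat m (\<Sum>i<n. c i)" "V \<in> carrier_mat n (\<Sum>i<n. c i)"
    and prod: "\<forall>x<m. \<forall>y<n. (U * transpose_mat V) $$ (x,y) = (\<Sum>i<n. (A * W) $$ (x,i) * W $$ (y,i))"
    and pen: "(\<Sum>k<(\<Sum>i<n. c i). col_sqnorm U k * col_sqnorm V k)
      = (\<Sum>i<n. (\<Sum>x<m. ((A * W) $$ (x,i))\<^sup>2) * (\<Sum>y<n. (W $$ (y,i))\<^sup>2) / real (c i))"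
    using factorization_with_repeated_columns[where a = "\<lambda>i x. (A * W) $$ (x,i)" and b = "\<lambda>i y. W $$ (y,i)"
        and c = c and r = n and m = m and n = n] c by blast
  have "U * transpose_mat V = A"
  proof (rule eq_matI)
    fix x y assume "x < dim_row A" "y < dim_col A"
    hence xy: "x < m" "y < n" using A by auto
    have "(U * transpose_mat V) $$ (x,y) = (\<Sum>i<n. (A * W) $$ (x,i) * W $$ (y,i))"
      by (rule prod[rule_format, OF xy])
    also have "\<dots> = (A * W * transpose_mat W) $$ (x,y)"
      by (rule index_mult_transpose_mat_sum[OF AWC WC xy, symmetric])
    also have "A * W * transpose_mat W = A * (W * transpose_mat W)"
      by (rule assoc_mult_mat[OF A WC]) (use WC in simp)
    also have "\<dots> = A" unfolding orthonormal_matD(3)[OF W] using A by simp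
    finally show "(U * transpose_mat V) $$ (x,y) = A $$ (x,y)" .
  qed (use UV A in auto)
  moreover have "dropout_penalty U V = (\<Sum>i<n. real (c i)) * (\<Sum>i<n. lam i / real (c i))"
  proof -
    have "(\<Sum>x<m. ((A * W) $$ (x,i))\<^sup>2) = lam i" if "i < n" for i
      using gram_mat_diag_sums[OF AWC D that that] by (simp add: power2_eq_square)
    moreover have "(\<Sum>y<n. (W $$ (y,i))\<^sup>2) = 1" if "i < n" for i
      using orthonormal_mat_cols[OF W] that unfolding orthonormal_on_def by (simp add: power2_eq_square)
    ultimately have "(\<Sum>k<(\<Sum>i<n. c i). col_sqnorm U k * col_sqnorm V k) = (\<Sum>i<n. lam i / real (c i))"
      unfolding pen by (intro sum.cong refl) simp
    thus ?thesis unfolding dropout_penalty_def using UV by simp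
  qed
  ultimately show ?thesis using UV by blast
qed

lemma dropout_penalty_approximates_nuclear_norm_sq:
  fixes A :: "real mat"
  assumes A: "A \<in> carrier_mat m n" and \<epsilon>: "0 < \<epsilon>"
  shows "\<exists>d U V. 0 < d \<and> U \<in> carrier_mat m d \<and> V \<in> carrier_mat n d \<and> U * transpose_mat V = A
    \<and> dropout_penalty U V \<le> (nuclear_norm A)\<^sup>2 + \<epsilon>"
proof (cases "n = 0")
  case True
  have "0\<^sub>m m 1 * transpose_mat (0\<^sub>m n 1) = A" using A True by (intro eq_matI) auto
  moreover have "dropout_penalty (0\<^sub>m m 1) (0\<^sub>m n 1) = 0" by (simp add: dropout_penalty_def col_sqnorm_def)
  ultimately show ?thesis using \<epsilon> by (intro exI[of _ 1] exI[of _ "0\<^sub>m m 1"] exI[of _ "0\<^sub>m n 1"]) auto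
next
  case False
  obtain W lam where W: "orthonormal_mat n W" and D: "transpose_mat (A * W) * (A * W) = mat_diag n lam"
    and lam: "\<forall>i<n. 0 \<le> lam i" and nuc: "nuclear_norm A = (\<Sum>i<n. sqrt (lam i))"
    using singular_value_decomposition[OF A] by blast
  define S where "S = nuclear_norm A"
  define N where "N = nat \<lceil>2 * real n * S / \<epsilon>\<rceil> + 1"
  have N: "0 < N" and "2 * real n * S / \<epsilon> \<le> real N" unfolding N_def by linarith+
  hence N_err: "2 * real n * S / real N \<le> \<epsilon>" using \<epsilon> by (simp add: field_simps)
  define \<sigma> where "\<sigma> = (\<lambda>i. sqrt (max 0 (lam i)))"
  define c where "c = (\<lambda>i. nat \<lceil>real N * \<sigma> i\<rceil> + 1)"
  obtain U V where UV: "U \<in> carrier_mat m (\<Sum>i<n. c i)" "V \<in> carrier_mat n (\<Sum>i<n. c i)"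
    and prod: "U * transpose_mat V = A"
    and pen: "dropout_penalty U V = (\<Sum>i<n. real (c i)) * (\<Sum>i<n. lam i / real (c i))"
    using factorization_with_multiplicities[OF A W D, of c] unfolding c_def by auto
  have "0 < (\<Sum>i<n. c i)" using False unfolding c_def by (simp add: sum_pos2[of _ 0])
  moreover have "dropout_penalty U V \<le> S\<^sup>2 + \<epsilon>"
  proof -
    have "dropout_penalty U V = (\<Sum>i<n. real (c i)) * (\<Sum>i<n. (\<sigma> i)\<^sup>2 / real (c i))"
      unfolding pen \<sigma>_def using lam by (intro arg_cong[of _ _ "(*) _"] sum.cong) auto
    also have "\<dots> \<le> (\<Sum>i<n. \<sigma> i)\<^sup>2 + 2 * real n * (\<Sum>i<n. \<sigma> i) / real N"
      unfolding c_def by (rule ceiling_multiplicities_bound[OF _ N]) (simp add: \<sigma>_def)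
    also have "(\<Sum>i<n. \<sigma> i) = S" unfolding S_def nuc \<sigma>_def using lam by (intro sum.cong) auto
    finally show ?thesis using N_err by simp
  qed
  ultimately show ?thesis using UV prod unfolding S_def by blast
qed

section \<open>Dropout versus nuclear norm regularization\<close>

lemma penalized_objective_le_dropout_obj:
  assumes p: "0 < p" "p < 1" and X: "X \<in> carrier_mat m n"
    and U: "U \<in> carrier_mat m d" and V: "V \<in> carrier_mat n d"
  shows "frob_sq (X - U * transpose_mat V) + (1 - p) / p * (nuclear_norm (U * transpose_mat V))\<^sup>2
    \<le> dropout_obj p X d U V"
proof -
  have "(1 - p) / p * (nuclear_norm (U * transpose_mat V))\<^sup>2 \<le> (1 - p) / p * dropout_penalty U V"
    by (rule mult_left_mono[OF nuclear_norm_sq_le_dropout_penalty[OF U V]]) (use p in simp)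
  thus ?thesis unfolding dropout_obj_eq_penalized[OF p X U V] by simp
qed

lemma dropout_obj_approximates_penalized_objective:
  assumes p: "0 < p" "p < 1" and X: "X \<in> carrier_mat m n" and A: "A \<in> carrier_mat m n"
    and \<epsilon>: "0 < \<epsilon>"
  shows "\<exists>d U V. 0 < d \<and> U \<in> carrier_mat m d \<and> V \<in> carrier_mat n d
    \<and> dropout_obj p X d U V \<le> frob_sq (X - A) + (1 - p) / p * (nuclear_norm A)\<^sup>2 + \<epsilon>"
proof -
  define c where "c = (1 - p) / p"
  have c: "0 < c" unfolding c_def using p by simp
  obtain d U V where d: "0 < d" and UV: "U \<in> carrier_mat m d" "V \<in> carrier_mat n d"
    and prod: "U * transpose_mat V = A" and pen: "dropout_penalty U V \<le> (nuclear_norm A)\<^sup>2 + \<epsilon> / c"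
    using dropout_penalty_approximates_nuclear_norm_sq[OF A divide_pos_pos[OF \<epsilon> c]] by blast
  have "dropout_obj p X d U V = frob_sq (X - A) + c * dropout_penalty U V"
    unfolding dropout_obj_eq_penalized[OF p X UV] prod c_def ..
  also have "\<dots> \<le> frob_sq (X - A) + c * ((nuclear_norm A)\<^sup>2 + \<epsilon> / c)"
    using pen c by simp
  also have "\<dots> = frob_sq (X - A) + c * (nuclear_norm A)\<^sup>2 + \<epsilon>"
    using c by (simp add: distrib_left)
  finally show ?thesis unfolding c_def using d UV by blast
qed

theorem theorem3:
  fixes p :: real and m n d_opt :: nat and X U_opt V_opt :: "real mat"
  assumes "0 < p" and "p < 1"
    and "X \<in> carrier_mat m n"
    and "0 < d_opt"
    and "U_opt \<in> carrier_mat m d_opt" and "V_opt \<in> carrier_mat n d_opt"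
    and "\<forall>d U V. 0 < d \<longrightarrow> U \<in> carrier_mat m d \<longrightarrow> V \<in> carrier_mat n d \<longrightarrow>
           dropout_obj p X d_opt U_opt V_opt \<le> dropout_obj p X d U V"
  shows "\<forall>A \<in> carrier_mat m n.
           frob_sq (X - U_opt * transpose_mat V_opt)
             + (1 - p) / p * (nuclear_norm (U_opt * transpose_mat V_opt))\<^sup>2
           \<le> frob_sq (X - A) + (1 - p) / p * (nuclear_norm A)\<^sup>2"
proof
  fix A :: "real mat" assume A: "A \<in> carrier_mat m n"
  show "frob_sq (X - U_opt * transpose_mat V_opt) + (1 - p) / p * (nuclear_norm (U_opt * transpose_mat V_opt))\<^sup>2
    \<le> frob_sq (X - A) + (1 - p) / p * (nuclear_norm A)\<^sup>2" (is "?L \<le> ?R")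
  proof (rule field_le_epsilon)
    fix \<epsilon> :: real assume "0 < \<epsilon>"
    then obtain d U V where d: "0 < d" and UV: "U \<in> carrier_mat m d" "V \<in> carrier_mat n d"
      and approx: "dropout_obj p X d U V \<le> ?R + \<epsilon>"
      using dropout_obj_approximates_penalized_objective[OF assms(1-3) A] by blast
    have "?L \<le> dropout_obj p X d_opt U_opt V_opt"
      by (rule penalized_objective_le_dropout_obj[OF assms(1-3,5,6)])
    also have "\<dots> \<le> dropout_obj p X d U V" using assms(7) d UV by blast
    also note approx
    finally show "?L \<le> ?R + \<epsilon>" .
  qed
qed

end
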